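(* Let $|\text{-}|:\mathcal E\to\mathcal B$ be a concrete category which is fibred over $\mathcal B$. If the $\mathcal Q_{\mathcal B}$-category $\overline{\mathcal E}$ is order-complete, then $\overline{\mathcal E}$ is conically cocomplete.
   Context: $\mathcal B$ has small hom-sets; $|\text{-}|$ is faithful; a map $f:|X|\to|Y|$ is an $\mathcal E$-morphism if it equals $|f'|$ for some $f':X\to Y$; $\overline{\mathcal E}(X,Y)$ is the set of these. $\mathcal E$ is fibred if for every $Z\in\mathrm{ob}\,\mathcal E$ and map $g:T\to|Z|$ there is an object $\widetilde Y$ with $|\widetilde Y|=T$ (initial lifting) such that a map $h:|W|\to T$ is an $\mathcal E$-morphism $W\to\widetilde Y$ iff $g\circ h$ is an $\mathcal E$-morphism $W\to Z$. The fibre $\mathcal E_T$ is the class of $Y$ with $|Y|=T$ preordered by $Y\le Y'$ iff $1_T\in\overline{\mathcal E}(Y,Y')$; $\overline{\mathcal E}$ is order-complete if each fibre admits joins of all (possibly large) subfamilies. For $\mathbf f\subseteq\mathcal B(S,T)$, $\mathbf h\subseteq\mathcal B(S,U)$ put $\mathbf h\swarrow\mathbf f=\{g\mid\forall f\in\mathbf f:g\circ f\in\mathbf h\}$. A presheaf of extent $T$ is a family $\varphi_X\subseteq\mathcal B(|X|,T)$ with $\varphi_X\circ\overline{\mathcal E}(X',X)\subseteq\varphi_{X'}$; a supremum is $Y$ with $|Y|=T$ and $\overline{\mathcal E}(Y,Z)=\bigcap_X\overline{\mathcal E}(X,Z)\swarrow\varphi_X$ for all $Z$. $\overline{\mathcal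 E}$ is conically cocomplete if for every $T$ and every family $(Y_i)_{i\in I}$ in $\mathcal E_T$ the presheaf $X\mapsto\bigcup_i\overline{\mathcal E}(X,Y_i)$ has a supremum. *)

theory Defs
  imports Main
begin

text \<open>A category B is given by a set of objects Ob, hom-sets Hom a b (sets, so hom-sets
are small), composition cmp g f (= g after f) and identities idm.\<close>

definition category ::
  "'b set \<Rightarrow> ('b \<Rightarrow> 'b \<Rightarrow> 'm set) \<Rightarrow> ('m \<Rightarrow> 'm \<Rightarrow> 'm) \<Rightarrow> ('b \<Rightarrow> 'm) \<Rightarrow> bool" where
  "category Ob Hom cmp idm \<longleftrightarrow>
     (\<forall>a b. (a \<notin> Ob \<or> b \<notin> Ob) \<longrightarrow> Hom a b = {}) \<and>
     (\<forall>a b a' b' f. f \<in> Hom a b \<and> f \<in> Hom a' b' \<longrightarrow> a = a' \<and> b = b') \<and>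
     (\<forall>a\<in>Ob. idm a \<in> Hom a a) \<and>
     (\<forall>a b c f g. f \<in> Hom a b \<and> g \<in> Hom b c \<longrightarrow> cmp g f \<in> Hom a c) \<and>
     (\<forall>a b f. f \<in> Hom a b \<longrightarrow> cmp (idm b) f = f \<and> cmp f (idm a) = f) \<and>
     (\<forall>a b c d f g h. f \<in> Hom a b \<and> g \<in> Hom b c \<and> h \<in> Hom c d \<longrightarrow>
        cmp h (cmp g f) = cmp (cmp h g) f)"

text \<open>A concrete category |-| : E \<rightarrow> B with |-| faithful is determined (up to isomorphism)
by its class of objects EOb, the object map U = |-| and, for objects X Y, the set
Ebar X Y \<subseteq> B(|X|,|Y|) of E-morphisms (the image of E(X,Y) under the faithful functor).\<close>

definition concrete_category ::
  "'b set \<Rightarrow> ('b \<Rightarrow> 'b \<Rightarrow> 'm set) \<Rightarrow> ('m \<Rightarrow> 'm \<Rightarrow> 'm) \<Rightarrow> ('b \<Rightarrow> 'm) \<Rightarrow>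
   'e set \<Rightarrow> ('e \<Rightarrow> 'b) \<Rightarrow> ('e \<Rightarrow> 'e \<Rightarrow> 'm set) \<Rightarrow> bool" where
  "concrete_category Ob Hom cmp idm EOb U Ebar \<longleftrightarrow>
     category Ob Hom cmp idm \<and>
     (\<forall>X\<in>EOb. U X \<in> Ob) \<and>
     (\<forall>X Y. Ebar X Y \<subseteq> Hom (U X) (U Y)) \<and>
     (\<forall>X Y. (X \<notin> EOb \<or> Y \<notin> EOb) \<longrightarrow> Ebar X Y = {}) \<and>
     (\<forall>X\<in>EOb. idm (U X) \<in> Ebar X X) \<and>
     (\<forall>X Y Z f g. f \<in> Ebar X Y \<and> g \<in> Ebar Y Z \<longrightarrow> cmp g f \<in> Ebar X Z)"

definition fibred ::
  "'b set \<Rightarrow> ('b \<Rightarrow> 'b \<Rightarrow> 'm set) \<Rightarrow> ('m \<Rightarrow> 'm \<Rightarrow> 'm) \<Rightarrow>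
   'e set \<Rightarrow> ('e \<Rightarrow> 'b) \<Rightarrow> ('e \<Rightarrow> 'e \<Rightarrow> 'm set) \<Rightarrow> bool" where
  "fibred Ob Hom cmp EOb U Ebar \<longleftrightarrow>
     (\<forall>Z\<in>EOb. \<forall>T\<in>Ob. \<forall>g\<in>Hom T (U Z).
        \<exists>Y\<in>EOb. U Y = T \<and>
          (\<forall>W\<in>EOb. \<forall>h\<in>Hom (U W) T. h \<in> Ebar W Y \<longleftrightarrow> cmp g h \<in> Ebar W Z))"

definition fibre :: "'e set \<Rightarrow> ('e \<Rightarrow> 'b) \<Rightarrow> 'b \<Rightarrow> 'e set" where
  "fibre EOb U T = {Y \<in> EOb. U Y = T}"

definition fibre_le :: "('b \<Rightarrow> 'm) \<Rightarrow> ('e \<Rightarrow> 'e \<Rightarrow> 'm set) \<Rightarrow> 'b \<Rightarrow> 'e \<Rightarrow> 'e \<Rightarrow> bool" where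
  "fibre_le idm Ebar T Y Y' \<longleftrightarrow> idm T \<in> Ebar Y Y'"

definition order_complete ::
  "'b set \<Rightarrow> ('b \<Rightarrow> 'm) \<Rightarrow> 'e set \<Rightarrow> ('e \<Rightarrow> 'b) \<Rightarrow> ('e \<Rightarrow> 'e \<Rightarrow> 'm set) \<Rightarrow> bool" where
  "order_complete Ob idm EOb U Ebar \<longleftrightarrow>
     (\<forall>T\<in>Ob. \<forall>S. S \<subseteq> fibre EOb U T \<longrightarrow>
        (\<exists>J\<in>fibre EOb U T. (\<forall>Y\<in>S. fibre_le idm Ebar T Y J) \<and>
           (\<forall>Y'\<in>fibre EOb U T. (\<forall>Y\<in>S. fibre_le idm Ebar T Y Y') \<longrightarrow> fibre_le idm Ebar T J Y')))"

text \<open>Right lifting h \<swarrow> f, for f \<subseteq> B(S,T), h \<subseteq> B(S,U); the result is a subset of B(T,U).\<close>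

definition lift ::
  "('b \<Rightarrow> 'b \<Rightarrow> 'm set) \<Rightarrow> ('m \<Rightarrow> 'm \<Rightarrow> 'm) \<Rightarrow> 'b \<Rightarrow> 'b \<Rightarrow> 'm set \<Rightarrow> 'm set \<Rightarrow> 'm set" where
  "lift Hom cmp T V h f = {g \<in> Hom T V. \<forall>f0\<in>f. cmp g f0 \<in> h}"

definition presheaf ::
  "('b \<Rightarrow> 'b \<Rightarrow> 'm set) \<Rightarrow> ('m \<Rightarrow> 'm \<Rightarrow> 'm) \<Rightarrow> 'e set \<Rightarrow> ('e \<Rightarrow> 'b) \<Rightarrow> ('e \<Rightarrow> 'e \<Rightarrow> 'm set) \<Rightarrow>
   'b \<Rightarrow> ('e \<Rightarrow> 'm set) \<Rightarrow> bool" where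
  "presheaf Hom cmp EOb U Ebar T \<phi> \<longleftrightarrow>
     (\<forall>X\<in>EOb. \<phi> X \<subseteq> Hom (U X) T) \<and>
     (\<forall>X\<in>EOb. \<forall>X'\<in>EOb. \<forall>g\<in>\<phi> X. \<forall>f\<in>Ebar X' X. cmp g f \<in> \<phi> X')"

definition is_supremum ::
  "('b \<Rightarrow> 'b \<Rightarrow> 'm set) \<Rightarrow> ('m \<Rightarrow> 'm \<Rightarrow> 'm) \<Rightarrow> 'e set \<Rightarrow> ('e \<Rightarrow> 'b) \<Rightarrow> ('e \<Rightarrow> 'e \<Rightarrow> 'm set) \<Rightarrow>
   'b \<Rightarrow> ('e \<Rightarrow> 'm set) \<Rightarrow> 'e \<Rightarrow> bool" where
  "is_supremum Hom cmp EOb U Ebar T \<phi> Y \<longleftrightarrow>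
     Y \<in> EOb \<and> U Y = T \<and>
     (\<forall>Z\<in>EOb. Ebar Y Z = (\<Inter>X\<in>EOb. lift Hom cmp T (U Z) (Ebar X Z) (\<phi> X)))"

text \<open>Conical cocompleteness: families in E_T are represented by their (sub)class of members;
the presheaf X \<mapsto> \<Union>_i Ebar(X, Y_i) depends only on the image of the family.\<close>

definition conically_cocomplete ::
  "'b set \<Rightarrow> ('b \<Rightarrow> 'b \<Rightarrow> 'm set) \<Rightarrow> ('m \<Rightarrow> 'm \<Rightarrow> 'm) \<Rightarrow>
   'e set \<Rightarrow> ('e \<Rightarrow> 'b) \<Rightarrow> ('e \<Rightarrow> 'e \<Rightarrow> 'm set) \<Rightarrow> bool" where
  "conically_cocomplete Ob Hom cmp EOb U Ebar \<longleftrightarrow>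
     (\<forall>T\<in>Ob. \<forall>S. S \<subseteq> fibre EOb U T \<longrightarrow>
        (\<exists>Y. is_supremum Hom cmp EOb U Ebar T (\<lambda>X. \<Union>Y'\<in>S. Ebar X Y') Y))"

end

theory Submission
  imports Defs
begin

text \<open>The join J of S in the fibre over T is the supremum. An E-morphism J \<rightarrow> Z restricts along
each Y \<le> J to an E-morphism, so it lies in the lifting. Conversely, for g in the lifting take
the initial lift \<tilde>Y of g: the lifting property makes every Y in S lie below \<tilde>Y, hence
J \<le> \<tilde>Y, and composing the identity of T, an E-morphism J \<rightarrow> \<tilde>Y, with g
shows that g is an E-morphism J \<rightarrow> Z.\<close>

locale concrete =
  fixes Ob :: "'b set" and Hom :: "'b \<Rightarrow> 'b \<Rightarrow> 'm set" and cmp :: "'m \<Rightarrow> 'm \<Rightarrow> 'm"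
    and idm :: "'b \<Rightarrow> 'm" and EOb :: "'e set" and U :: "'e \<Rightarrow> 'b"
    and Ebar :: "'e \<Rightarrow> 'e \<Rightarrow> 'm set"
  assumes concrete_category: "concrete_category Ob Hom cmp idm EOb U Ebar"
begin

lemma Ebar_subset_Hom: "Ebar X Y \<subseteq> Hom (U X) (U Y)"
  using concrete_category unfolding concrete_category_def by blast

lemma Ebar_comp: "f \<in> Ebar X Y \<Longrightarrow> g \<in> Ebar Y Z \<Longrightarrow> cmp g f \<in> Ebar X Z"
  using concrete_category unfolding concrete_category_def by blast

lemma id_in_Ebar: "X \<in> EOb \<Longrightarrow> idm (U X) \<in> Ebar X X"
  using concrete_category unfolding concrete_category_def by blast

lemma category: "category Ob Hom cmp idm"
  using concrete_category unfolding concrete_category_def by blast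

lemma id_in_Hom: "a \<in> Ob \<Longrightarrow> idm a \<in> Hom a a"
  using category unfolding category_def by blast

lemma comp_id_left: "f \<in> Hom a b \<Longrightarrow> cmp (idm b) f = f"
  using category unfolding category_def by blast

lemma comp_id_right: "f \<in> Hom a b \<Longrightarrow> cmp f (idm a) = f"
  using category unfolding category_def by blast

lemma Ebar_fibre_le_trans:
  assumes "f \<in> Ebar X Y" and "U Y = T" and "fibre_le idm Ebar T Y Y'"
  shows "f \<in> Ebar X Y'"
proof -
  have "cmp (idm T) f \<in> Ebar X Y'"
    using assms Ebar_comp unfolding fibre_le_def by blast
  moreover have "f \<in> Hom (U X) T"
    using assms(1,2) Ebar_subset_Hom by blast
  ultimately show ?thesis
    using comp_id_left by simp
qed

lemma fibre_le_initial_lift_iff: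
  assumes lifting: "\<forall>W\<in>EOb. \<forall>h\<in>Hom (U W) T. h \<in> Ebar W Y\<^sub>0 \<longleftrightarrow> cmp g h \<in> Ebar W Z"
    and "T \<in> Ob" and "g \<in> Hom T (U Z)" and "Y \<in> fibre EOb U T"
  shows "fibre_le idm Ebar T Y Y\<^sub>0 \<longleftrightarrow> g \<in> Ebar Y Z"
proof -
  have "Y \<in> EOb" and "U Y = T"
    using assms(4) unfolding fibre_def by auto
  then have "idm T \<in> Ebar Y Y\<^sub>0 \<longleftrightarrow> cmp g (idm T) \<in> Ebar Y Z"
    using lifting id_in_Hom[OF \<open>T \<in> Ob\<close>] by blast
  then show ?thesis
    using comp_id_right[OF assms(3)] unfolding fibre_le_def by simp
qed

lemma Ebar_fibre_upper_bound_subset_lift: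
  assumes "S \<subseteq> fibre EOb U T" and "U J = T" and "\<forall>Y\<in>S. fibre_le idm Ebar T Y J"
  shows "Ebar J Z \<subseteq> (\<Inter>X\<in>EOb. lift Hom cmp T (U Z) (Ebar X Z) (\<Union>Y\<in>S. Ebar X Y))"
proof (intro subsetI INT_I)
  fix g X
  assume g: "g \<in> Ebar J Z"
  have "cmp g f \<in> Ebar X Z" if "Y \<in> S" and "f \<in> Ebar X Y" for Y f
  proof -
    have "U Y = T"
      using assms(1) \<open>Y \<in> S\<close> unfolding fibre_def by auto
    then have "f \<in> Ebar X J"
      using Ebar_fibre_le_trans \<open>f \<in> Ebar X Y\<close> assms(3) \<open>Y \<in> S\<close> by blast
    then show ?thesis
      using Ebar_comp g by blast
  qed
  moreover have "g \<in> Hom T (U Z)"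
    using Ebar_subset_Hom g assms(2) by blast
  ultimately show "g \<in> lift Hom cmp T (U Z) (Ebar X Z) (\<Union>Y\<in>S. Ebar X Y)"
    unfolding lift_def by blast
qed

lemma lift_subset_Ebar_fibre_join:
  assumes fibred: "fibred Ob Hom cmp EOb U Ebar"
    and "T \<in> Ob" and "Z \<in> EOb" and "S \<subseteq> fibre EOb U T" and "J \<in> fibre EOb U T"
    and least: "\<forall>Y'\<in>fibre EOb U T. (\<forall>Y\<in>S. fibre_le idm Ebar T Y Y') \<longrightarrow> fibre_le idm Ebar T J Y'"
  shows "(\<Inter>X\<in>EOb. lift Hom cmp T (U Z) (Ebar X Z) (\<Union>Y\<in>S. Ebar X Y)) \<subseteq> Ebar J Z"
proof
  fix g
  assume "g \<in> (\<Inter>X\<in>EOb. lift Hom cmp T (U Z) (Ebar X Z) (\<Union>Y\<in>S. Ebar X Y))"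
  then have g: "g \<in> Hom T (U Z)"
    and g_lifts: "\<And>X Y f. X \<in> EOb \<Longrightarrow> Y \<in> S \<Longrightarrow> f \<in> Ebar X Y \<Longrightarrow> cmp g f \<in> Ebar X Z"
    using \<open>Z \<in> EOb\<close> unfolding lift_def by blast+
  obtain Y\<^sub>0 where Y\<^sub>0: "Y\<^sub>0 \<in> fibre EOb U T"
    and lifting: "\<forall>W\<in>EOb. \<forall>h\<in>Hom (U W) T. h \<in> Ebar W Y\<^sub>0 \<longleftrightarrow> cmp g h \<in> Ebar W Z"
    using fibred \<open>Z \<in> EOb\<close> \<open>T \<in> Ob\<close> g unfolding fibred_def fibre_def by blast
  have "g \<in> Ebar Y Z" if "Y \<in> S" for Y
  proof -
    have "Y \<in> EOb" and "U Y = T"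
      using assms(4) \<open>Y \<in> S\<close> unfolding fibre_def by auto
    then have "cmp g (idm T) \<in> Ebar Y Z"
      using g_lifts[OF \<open>Y \<in> EOb\<close> \<open>Y \<in> S\<close> id_in_Ebar[OF \<open>Y \<in> EOb\<close>]] by simp
    then show ?thesis
      using comp_id_right[OF g] by simp
  qed
  then have "\<forall>Y\<in>S. fibre_le idm Ebar T Y Y\<^sub>0"
    using fibre_le_initial_lift_iff[OF lifting \<open>T \<in> Ob\<close> g] assms(4) by blast
  then have "fibre_le idm Ebar T J Y\<^sub>0"
    using least Y\<^sub>0 by blast
  then show "g \<in> Ebar J Z"
    using fibre_le_initial_lift_iff[OF lifting \<open>T \<in> Ob\<close> g \<open>J \<in> fibre EOb U T\<close>] by blast
qed

lemma fibre_join_is_supremum: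
  assumes "fibred Ob Hom cmp EOb U Ebar"
    and "T \<in> Ob" and "S \<subseteq> fibre EOb U T" and J: "J \<in> fibre EOb U T"
    and "\<forall>Y\<in>S. fibre_le idm Ebar T Y J"
    and "\<forall>Y'\<in>fibre EOb U T. (\<forall>Y\<in>S. fibre_le idm Ebar T Y Y') \<longrightarrow> fibre_le idm Ebar T J Y'"
  shows "is_supremum Hom cmp EOb U Ebar T (\<lambda>X. \<Union>Y\<in>S. Ebar X Y) J"
proof -
  have "J \<in> EOb" and "U J = T"
    using J unfolding fibre_def by auto
  moreover have "Ebar J Z = (\<Inter>X\<in>EOb. lift Hom cmp T (U Z) (Ebar X Z) (\<Union>Y\<in>S. Ebar X Y))"
    if "Z \<in> EOb" for Z
    using Ebar_fibre_upper_bound_subset_lift[OF assms(3) \<open>U J = T\<close> assms(5)]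
      lift_subset_Ebar_fibre_join[OF assms(1,2) that assms(3,4,6)]
    by (rule subset_antisym)
  ultimately show ?thesis
    unfolding is_supremum_def by blast
qed

end

theorem proposition4p10:
  assumes "concrete_category Ob Hom cmp idm EOb U Ebar"
    and "fibred Ob Hom cmp EOb U Ebar"
    and "order_complete Ob idm EOb U Ebar"
  shows "conically_cocomplete Ob Hom cmp EOb U Ebar"
  unfolding conically_cocomplete_def
proof (intro ballI allI impI)
  interpret concrete Ob Hom cmp idm EOb U Ebar
    using assms(1) by (rule concrete.intro)
  fix T S
  assume "T \<in> Ob" and "S \<subseteq> fibre EOb U T"
  then obtain J where "J \<in> fibre EOb U T" and "\<forall>Y\<in>S. fibre_le idm Ebar T Y J"
    and "\<forall>Y'\<in>fibre EOb U T. (\<forall>Y\<in>S. fibre_le idm Ebar T Y Y') \<longrightarrow> fibre_le idm Ebar T J Y'"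
    using assms(3) unfolding order_complete_def by blast
  then show "\<exists>Y. is_supremum Hom cmp EOb U Ebar T (\<lambda>X. \<Union>Y\<in>S. Ebar X Y) Y"
    using fibre_join_is_supremum assms(2) \<open>T \<in> Ob\<close> \<open>S \<subseteq> fibre EOb U T\<close> by blast
qed

end
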